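(* For every $d\ge 2$, $\mathcal{NN}_{\mathrm{LReLU}}(d,d,d)$ compactly approximates $\mathrm{INN}_{\mathrm{ACF}_d}$: for every $f\in\mathrm{INN}_{\mathrm{ACF}_d}$, every compact $K\subset\mathbb{R}^d$ and every $\epsilon>0$ there exists $g\in\mathcal{NN}_{\mathrm{LReLU}}(d,d,d)$ with $\sup_{x\in K}\|f(x)-g(x)\|_\infty<\epsilon$.
   Context: For $\beta\in\mathbb{R}$, $\mathrm{LReLU}_\beta(x)=x$ if $x\ge 0$ and $\beta x$ if $x<0$, applied componentwise to vectors. $\mathcal{NN}_{\mathrm{LReLU}}(d,d,d)$ is the set of all maps $W_{N+1}\circ\mathrm{LReLU}_{\beta_N}\circ W_N\circ\cdots\circ\mathrm{LReLU}_{\beta_1}\circ W_1:\mathbb{R}^d\to\mathbb{R}^d$ with $N\in\mathbb{N}_0$, $\beta_i\in\mathbb{R}$, integers $1\le d_1,\dots,d_N\le d$, $d_0=d_{N+1}=d$, and $W_i:\mathbb{R}^{d_{i-1}}\to\mathbb{R}^{d_i}$ affine. $\mathrm{ACF}_d$ (single-coordinate affine coupling flows) is the set of maps $\mathbb{R}^d\to\mathbb{R}^d$ of the form $x\mapsto(x_1,\dots,x_{d-1},\exp(s(x_{1:d-1}))\,x_d+t(x_{1:d-1}))$ with $s,t:\mathbb{R}^{d-1}\to\mathbb{R}$ continuous, where $x_{1:d-1}=(x_1,\dots,x_{d-1})$. For a set $\mathcal{G}$ of invertible maps $\mathbb{R}^d\to\mathbb{R}^d$, $\mathrm{INN}_{\mathcal{G}}$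 is the set of all compositions $W_1\circ g_1\circ W_2\circ g_2\circ\cdots\circ W_n\circ g_n\circ W_{n+1}$ with $n\in\mathbb{N}$, $g_i\in\mathcal{G}$ and $W_i$ invertible affine maps of $\mathbb{R}^d$. *)

theory Defs
  imports "HOL-Analysis.Analysis"
begin

text \<open>A vector of R^m is represented as a function nat => real whose
coordinates 0..m-1 are the entries and all other coordinates are 0. The ambient
space nat => real carries the product topology, which restricted to Rvec m is the
Euclidean topology of R^m.\<close>

definition Rvec :: "nat \<Rightarrow> (nat \<Rightarrow> real) set" where
  "Rvec m = {x. \<forall>i\<ge>m. x i = 0}"

definition aff :: "(nat \<Rightarrow> nat \<Rightarrow> real) \<Rightarrow> (nat \<Rightarrow> real) \<Rightarrow> nat \<Rightarrow> nat
    \<Rightarrow> (nat \<Rightarrow> real) \<Rightarrow> (nat \<Rightarrow> real)" where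
  "aff A b m n x = (\<lambda>i. if i < n then (\<Sum>j<m. A i j * x j) + b i else 0)"

definition lrelu :: "real \<Rightarrow> (nat \<Rightarrow> real) \<Rightarrow> (nat \<Rightarrow> real)" where
  "lrelu \<beta> x = (\<lambda>i. if x i \<ge> 0 then x i else \<beta> * x i)"

inductive nn_pre :: "nat \<Rightarrow> nat \<Rightarrow> ((nat \<Rightarrow> real) \<Rightarrow> (nat \<Rightarrow> real)) \<Rightarrow> bool"
  for d :: nat where
  first: "nn_pre d m (aff A b d m)"
| step: "\<lbrakk>nn_pre d k h; 1 \<le> k; k \<le> d\<rbrakk> \<Longrightarrow> nn_pre d m (aff A b k m \<circ> lrelu \<beta> \<circ> h)"

definition NN_LReLU :: "nat \<Rightarrow> ((nat \<Rightarrow> real) \<Rightarrow> (nat \<Rightarrow> real)) set" where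
  "NN_LReLU d = {g. nn_pre d d g}"

definition acf_map :: "nat \<Rightarrow> ((nat \<Rightarrow> real) \<Rightarrow> real) \<Rightarrow> ((nat \<Rightarrow> real) \<Rightarrow> real)
    \<Rightarrow> (nat \<Rightarrow> real) \<Rightarrow> (nat \<Rightarrow> real)" where
  "acf_map d s t x =
     (let x' = (\<lambda>i. if i < d - 1 then x i else 0)
      in x(d - 1 := exp (s x') * x (d - 1) + t x'))"

definition ACF :: "nat \<Rightarrow> ((nat \<Rightarrow> real) \<Rightarrow> (nat \<Rightarrow> real)) set" where
  "ACF d = {acf_map d s t | s t.
      continuous_on (Rvec (d - 1)) s \<and> continuous_on (Rvec (d - 1)) t}"

definition inv_aff :: "nat \<Rightarrow> ((nat \<Rightarrow> real) \<Rightarrow> (nat \<Rightarrow> real)) set" where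
  "inv_aff d = {aff A b d d | A b. bij_betw (aff A b d d) (Rvec d) (Rvec d)}"

inductive inn :: "((nat \<Rightarrow> real) \<Rightarrow> (nat \<Rightarrow> real)) set \<Rightarrow> nat
    \<Rightarrow> ((nat \<Rightarrow> real) \<Rightarrow> (nat \<Rightarrow> real)) \<Rightarrow> bool"
  for G :: "((nat \<Rightarrow> real) \<Rightarrow> (nat \<Rightarrow> real)) set" and d :: nat where
  base: "\<lbrakk>W1 \<in> inv_aff d; g \<in> G; W2 \<in> inv_aff d\<rbrakk> \<Longrightarrow> inn G d (W1 \<circ> g \<circ> W2)"
| step: "\<lbrakk>W \<in> inv_aff d; g \<in> G; inn G d f\<rbrakk> \<Longrightarrow> inn G d (W \<circ> g \<circ> f)"

definition INN :: "((nat \<Rightarrow> real) \<Rightarrow> (nat \<Rightarrow> real)) set \<Rightarrow> nat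
    \<Rightarrow> ((nat \<Rightarrow> real) \<Rightarrow> (nat \<Rightarrow> real)) set" where
  "INN G d = {f. inn G d f}"

definition linf :: "nat \<Rightarrow> (nat \<Rightarrow> real) \<Rightarrow> real" where
  "linf d v = Max ((\<lambda>i. \<bar>v i\<bar>) ` {..<d})"

end

theory Submission
  imports Defs
begin

text \<open>Call a map of \<open>\<real>\<^sup>d\<close> admissible if it is continuous, preserves \<open>\<real>\<^sup>d\<close>
  and is uniformly approximable by LReLU networks on every cube. Admissible maps are closed
  under composition, because the outer map is uniformly continuous on a slightly larger cube, and
  affine maps are networks; so it suffices to show that a coupling layer
  \<open>x\<^sub>d \<mapsto> exp (s x') x\<^sub>d + t x'\<close> is admissible. On a cube it factors into the increasing maps
  \<open>y \<mapsto> y + c\<close>, \<open>ln\<close>, \<open>exp\<close> of the last coordinate and shears \<open>x\<^sub>d \<mapsto> x\<^sub>d + G x'\<close>.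

  A continuous increasing map of the last coordinate is approximated by its piecewise linear
  interpolant, a composition of kinks \<open>y \<mapsto> y + c relu (y - t)\<close> with \<open>c > -1\<close>, each of which
  is a network with one hidden LReLU layer. The functions \<open>G\<close> with admissible shear contain
  constants and coordinates and are closed under sums, scalar multiples and \<open>relu\<close> (a small
  kink conjugated by shears), hence contain the upper envelopes of cones, which approximate every
  continuous \<open>G\<close> uniformly on cubes.\<close>

lemma nn_pre_out_of_range: "nn_pre d m g \<Longrightarrow> m \<le> i \<Longrightarrow> g x i = 0"
  by (induction rule: nn_pre.induct) (auto simp: aff_def)

lemma aff_comp:
  "aff A b m n \<circ> aff A' b' k m =
   aff (\<lambda>i j. \<Sum>l<m. A i l * A' l j) (\<lambda>i. (\<Sum>l<m. A i l * b' l) + b i) k n"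
proof
  fix x
  have "(\<Sum>l<m. A i l * ((\<Sum>j<k. A' l j * x j) + b' l)) =
        (\<Sum>j<k. (\<Sum>l<m. A i l * A' l j) * x j) + (\<Sum>l<m. A i l * b' l)" for i
    by (simp add: distrib_left sum.distrib sum_distrib_left sum_distrib_right
        sum.swap[of _ "{..<k}"] mult.assoc)
  moreover have "(\<Sum>l<m. if l < m then A i l * ((\<Sum>j<k. A' l j * x j) + b' l) else 0)
     = (\<Sum>l<m. A i l * ((\<Sum>j<k. A' l j * x j) + b' l))" for i
    by (rule sum.cong) auto
  ultimately show "(aff A b m n \<circ> aff A' b' k m) x =
      aff (\<lambda>i j. \<Sum>l<m. A i l * A' l j) (\<lambda>i. (\<Sum>l<m. A i l * b' l) + b i) k n x"
    unfolding aff_def by (auto simp: if_distrib)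
qed

lemma nn_pre_aff_comp:
  assumes "nn_pre d k g" shows "nn_pre d m (aff A b k m \<circ> g)"
  using assms
proof (cases rule: nn_pre.cases)
  case (first A' b')
  then show ?thesis by (simp add: aff_comp nn_pre.first)
next
  case (step k' h A' b' \<beta>)
  then show ?thesis by (simp add: comp_assoc[symmetric] aff_comp nn_pre.step)
qed

lemma nn_pre_comp: "nn_pre d m g2 \<Longrightarrow> nn_pre d d g1 \<Longrightarrow> nn_pre d m (g2 \<circ> g1)"
proof (induction rule: nn_pre.induct)
  case (first m A b)
  then show ?case by (rule nn_pre_aff_comp)
next
  case (step k h m A b \<beta>)
  then have "nn_pre d m (aff A b k m \<circ> lrelu \<beta> \<circ> (h \<circ> g1))"
    by (intro nn_pre.step) (auto simp: comp_def)
  then show ?case by (simp add: comp_def)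
qed

lemma NN_LReLU_comp: "g2 \<in> NN_LReLU d \<Longrightarrow> g1 \<in> NN_LReLU d \<Longrightarrow> g2 \<circ> g1 \<in> NN_LReLU d"
  by (simp add: NN_LReLU_def nn_pre_comp)

lemma NN_LReLU_Rvec: "g \<in> NN_LReLU d \<Longrightarrow> g x \<in> Rvec d"
  by (auto simp: NN_LReLU_def Rvec_def nn_pre_out_of_range)

lemma Rvec_eqI:
  assumes "x \<in> Rvec d" "y \<in> Rvec d" "\<And>i. i < d \<Longrightarrow> x i = y i" shows "x = y"
proof
  fix i show "x i = y i"
    using assms by (cases "i < d") (auto simp: Rvec_def)
qed

lemma aff_diagonal:
  "aff (\<lambda>i j. if i = j then a i else 0) b n n = (\<lambda>x i. if i < n then a i * x i + b i else 0)"
  by (auto simp: aff_def if_distrib[of "\<lambda>u. u * _"] cong: if_cong)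

lemma aff_in_NN_LReLU: "aff A b d d \<in> NN_LReLU d"
  by (simp add: NN_LReLU_def nn_pre.first)

definition cube :: "nat \<Rightarrow> real \<Rightarrow> (nat \<Rightarrow> real) set" where
  "cube d R = {x \<in> Rvec d. \<forall>i<d. \<bar>x i\<bar> \<le> R}"

lemma continuous_on_coordinate [continuous_intros]:
  "continuous_on S (\<lambda>x::'a \<Rightarrow> 'b::topological_space. x i)"
  by (rule continuous_on_subset[OF continuous_on_product_coordinates]) simp

lemma cube_mono: "R \<le> R' \<Longrightarrow> cube d R \<subseteq> cube d R'"
  by (auto simp: cube_def)

lemma cube_eq_PiE: "cube d R = PiE UNIV (\<lambda>i. if i < d then {-R..R} else {0})"
proof -
  have "x \<in> cube d R \<longleftrightarrow> (\<forall>i. x i \<in> (if i < d then {-R..R} else {0}))" for x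
  proof -
    have "(\<forall>i<d. \<bar>x i\<bar> \<le> R) \<longleftrightarrow> (\<forall>i<d. x i \<in> {-R..R})"
      unfolding atLeastAtMost_iff abs_le_iff by (meson minus_le_iff)
    moreover have "x \<in> Rvec d \<longleftrightarrow> (\<forall>i. \<not> i < d \<longrightarrow> x i = 0)"
      by (simp add: Rvec_def not_less)
    ultimately show ?thesis
      unfolding cube_def by (simp only: mem_Collect_eq) (metis singleton_iff)
  qed
  then show ?thesis by (auto simp: PiE_iff)
qed

lemma compact_cube: "compact (cube d R)"
proof -
  have "compactin (product_topology (\<lambda>i. euclidean) UNIV) (cube d R)"
    unfolding cube_eq_PiE compactin_PiE by auto
  then show ?thesis by (simp add: euclidean_product_topology)
qed

lemma compact_subset_cube:
  assumes "compact K" "K \<subseteq> Rvec d"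
  obtains R where "K \<subseteq> cube d R"
proof -
  have "bounded ((\<lambda>x. x i) ` K)" for i
    by (intro compact_imp_bounded compact_continuous_image assms(1) continuous_on_coordinate)
  then have "\<exists>B. \<forall>x\<in>K. \<bar>x i\<bar> \<le> B" for i
    unfolding bounded_iff by auto
  then obtain B where B: "\<And>x i. x \<in> K \<Longrightarrow> \<bar>x i\<bar> \<le> B i"
    by metis
  have "\<bar>x i\<bar> \<le> Max (B ` {..<d})" if "x \<in> K" "i < d" for x i
    using B[OF that(1), of i] that(2) by (meson Max_ge finite_imageI finite_lessThan image_eqI
        lessThan_iff order.trans)
  then have "K \<subseteq> cube d (Max (B ` {..<d}))"
    using assms(2) by (auto simp: cube_def)
  then show thesis by (rule that)
qed

lemma cube_bounded:
  fixes G :: "(nat \<Rightarrow> real) \<Rightarrow> real"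
  assumes "continuous_on (Rvec d) G"
  obtains B where "\<And>x. x \<in> cube d R \<Longrightarrow> \<bar>G x\<bar> \<le> B"
proof -
  have "compact (G ` cube d R)"
    by (rule compact_continuous_image[OF continuous_on_subset[OF assms] compact_cube])
      (auto simp: cube_def)
  then have "bounded (G ` cube d R)" by (rule compact_imp_bounded)
  then obtain B where B: "\<forall>y\<in>G ` cube d R. norm y \<le> B" unfolding bounded_iff by blast
  show thesis by (rule that[of B]) (use B in auto)
qed

lemma cube_subset_cube_dim:
  assumes "m \<le> d" "0 \<le> R" shows "cube m R \<subseteq> cube d R"
proof
  fix x assume x: "x \<in> cube m R"
  have "\<bar>x i\<bar> \<le> R" if "i < d" for i
    using x assms(2) by (cases "i < m") (auto simp: cube_def Rvec_def)
  with x assms(1) show "x \<in> cube d R" by (auto simp: cube_def Rvec_def)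
qed

lemma dist_fun_le_coordinatewise:
  fixes x y :: "nat \<Rightarrow> real"
  assumes "\<And>k. \<bar>x k - y k\<bar> \<le> \<delta>"
  shows "dist x y \<le> 2 * \<delta> + (1/2)^N"
proof -
  have "{dist (x (from_nat n)) (y (from_nat n)) |n. n \<le> N} =
      (\<lambda>n. dist (x (from_nat n)) (y (from_nat n))) ` {..N}"
    by auto
  moreover have "dist (x (from_nat n)) (y (from_nat n)) \<le> \<delta>" for n
    using assms by (simp add: dist_real_def)
  ultimately have "Max {dist (x (from_nat n)) (y (from_nat n)) |n. n \<le> N} \<le> \<delta>"
    by simp
  then show ?thesis using dist_fun_le_dist_first_terms[of x y N] by linarith
qed

lemma cube_uniformly_continuous:
  fixes F :: "(nat \<Rightarrow> real) \<Rightarrow> 'a::metric_space"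
  assumes "continuous_on (Rvec d) F" "\<epsilon> > 0"
  shows "\<forall>\<^sub>F \<delta> in at_right 0. \<forall>x\<in>cube d R. \<forall>y\<in>cube d R.
           (\<forall>i<d. \<bar>x i - y i\<bar> \<le> \<delta>) \<longrightarrow> dist (F x) (F y) < \<epsilon>"
proof -
  have "uniformly_continuous_on (cube d R) F"
    by (rule compact_uniformly_continuous[OF continuous_on_subset[OF assms(1)] compact_cube])
      (auto simp: cube_def)
  then obtain e where e: "e > 0"
    and close: "\<forall>x\<in>cube d R. \<forall>y\<in>cube d R. dist y x < e \<longrightarrow> dist (F y) (F x) < \<epsilon>"
    unfolding uniformly_continuous_on_def using assms(2) by blast
  obtain N where N: "(1/2::real)^N < e/2"
    using real_arch_pow_inv[of "e/2" "1/2"] e by auto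
  have "dist (F x) (F y) < \<epsilon>"
    if x: "x \<in> cube d R" and y: "y \<in> cube d R" and xy: "\<forall>i<d. \<bar>x i - y i\<bar> \<le> \<delta>"
      and \<delta>: "0 < \<delta>" "\<delta> < e/4" for x y \<delta>
  proof -
    have coord: "\<bar>x k - y k\<bar> \<le> \<delta>" for k
    proof (cases "k < d")
      case False
      then show ?thesis using x y \<delta> by (simp add: cube_def Rvec_def)
    qed (use xy in blast)
    have "dist x y < e"
      using dist_fun_le_coordinatewise[of x y \<delta>, OF coord, of N] N \<delta> by linarith
    then show ?thesis using close x y by (simp add: dist_commute)
  qed
  then show ?thesis
    unfolding eventually_at_right_field using e by (intro exI[of _ "e/4"]) simp
qed

lemma cube_uniformly_continuous_real:
  fixes G :: "(nat \<Rightarrow> real) \<Rightarrow> real"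
  assumes "continuous_on (Rvec d) G" "\<epsilon> > 0"
  obtains \<delta> where "\<delta> > 0" "\<And>x y. x \<in> cube d R \<Longrightarrow> y \<in> cube d R \<Longrightarrow>
      \<forall>i<d. \<bar>x i - y i\<bar> \<le> \<delta> \<Longrightarrow> \<bar>G x - G y\<bar> < \<epsilon>"
proof -
  obtain b where "b > 0" and b: "\<And>\<delta>. 0 < \<delta> \<Longrightarrow> \<delta> < b \<Longrightarrow> \<forall>x\<in>cube d R. \<forall>y\<in>cube d R.
      (\<forall>i<d. \<bar>x i - y i\<bar> \<le> \<delta>) \<longrightarrow> dist (G x) (G y) < \<epsilon>"
    using cube_uniformly_continuous[OF assms, of R] unfolding eventually_at_right_field by auto
  show thesis
    by (rule that[of "b/2"]) (use \<open>b > 0\<close> b[of "b/2"] in \<open>auto simp: dist_real_def\<close>)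
qed

lemma cube_uniformly_continuous_coordinates:
  fixes T :: "(nat \<Rightarrow> real) \<Rightarrow> nat \<Rightarrow> real"
  assumes "continuous_on (Rvec d) T" "\<epsilon> > 0"
  obtains \<delta> where "\<delta> > 0" "\<And>x y i. x \<in> cube d R \<Longrightarrow> y \<in> cube d R \<Longrightarrow>
      \<forall>j<d. \<bar>x j - y j\<bar> \<le> \<delta> \<Longrightarrow> i < d \<Longrightarrow> \<bar>T x i - T y i\<bar> < \<epsilon>"
proof -
  have "\<forall>i\<in>{..<d}. \<forall>\<^sub>F \<delta> in at_right 0. \<forall>x\<in>cube d R. \<forall>y\<in>cube d R.
           (\<forall>j<d. \<bar>x j - y j\<bar> \<le> \<delta>) \<longrightarrow> dist (T x i) (T y i) < \<epsilon>"
    using cube_uniformly_continuous[OF continuous_on_product_then_coordinatewise[OF assms(1)]]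
      assms(2) by blast
  then have "\<forall>\<^sub>F \<delta> in at_right 0. \<forall>i\<in>{..<d}. \<forall>x\<in>cube d R. \<forall>y\<in>cube d R.
           (\<forall>j<d. \<bar>x j - y j\<bar> \<le> \<delta>) \<longrightarrow> dist (T x i) (T y i) < \<epsilon>"
    by (rule eventually_ball_finite[OF finite_lessThan])
  then obtain b where "b > 0" and b: "\<And>\<delta>. 0 < \<delta> \<Longrightarrow> \<delta> < b \<Longrightarrow> \<forall>i\<in>{..<d}. \<forall>x\<in>cube d R. \<forall>y\<in>cube d R.
           (\<forall>j<d. \<bar>x j - y j\<bar> \<le> \<delta>) \<longrightarrow> dist (T x i) (T y i) < \<epsilon>"
    unfolding eventually_at_right_field by auto
  show thesis
    by (rule that[of "b/2"]) (use \<open>b > 0\<close> b[of "b/2"] in \<open>auto simp: dist_real_def\<close>)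
qed

subsection \<open>Maps approximable by networks\<close>

definition nn_approx :: "nat \<Rightarrow> ((nat \<Rightarrow> real) \<Rightarrow> (nat \<Rightarrow> real)) \<Rightarrow> bool" where
  "nn_approx d T \<longleftrightarrow>
     (\<forall>R \<epsilon>. \<epsilon> > 0 \<longrightarrow> (\<exists>g\<in>NN_LReLU d. \<forall>x\<in>cube d R. \<forall>i<d. \<bar>T x i - g x i\<bar> \<le> \<epsilon>))"

definition admissible :: "nat \<Rightarrow> ((nat \<Rightarrow> real) \<Rightarrow> (nat \<Rightarrow> real)) \<Rightarrow> bool" where
  "admissible d T \<longleftrightarrow> nn_approx d T \<and> continuous_on (Rvec d) T \<and> T ` Rvec d \<subseteq> Rvec d"

lemma nn_approxE:
  assumes "nn_approx d T" "\<epsilon> > 0"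
  obtains g where "g \<in> NN_LReLU d" "\<And>x i. x \<in> cube d R \<Longrightarrow> i < d \<Longrightarrow> \<bar>T x i - g x i\<bar> \<le> \<epsilon>"
  using assms unfolding nn_approx_def by blast

lemma nn_approx_limit:
  assumes "\<And>R \<epsilon>. \<epsilon> > 0 \<Longrightarrow> \<exists>T'. nn_approx d T' \<and> (\<forall>x\<in>cube d R. \<forall>i<d. \<bar>T x i - T' x i\<bar> \<le> \<epsilon>)"
  shows "nn_approx d T"
  unfolding nn_approx_def
proof (intro allI impI)
  fix R \<epsilon> :: real
  assume "\<epsilon> > 0"
  then obtain T' where "nn_approx d T'" and T': "\<forall>x\<in>cube d R. \<forall>i<d. \<bar>T x i - T' x i\<bar> \<le> \<epsilon>/2"
    using assms[of "\<epsilon>/2" R] by auto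
  then obtain g where g: "g \<in> NN_LReLU d" "\<And>x i. x \<in> cube d R \<Longrightarrow> i < d \<Longrightarrow> \<bar>T' x i - g x i\<bar> \<le> \<epsilon>/2"
    using nn_approxE[OF \<open>nn_approx d T'\<close> half_gt_zero[OF \<open>\<epsilon> > 0\<close>]] by metis
  have "\<bar>T x i - g x i\<bar> \<le> \<epsilon>" if "x \<in> cube d R" "i < d" for x i
  proof -
    have "\<bar>T x i - T' x i\<bar> \<le> \<epsilon>/2" using T' that by blast
    then show ?thesis using g(2)[OF that] by linarith
  qed
  with g(1) show "\<exists>g\<in>NN_LReLU d. \<forall>x\<in>cube d R. \<forall>i<d. \<bar>T x i - g x i\<bar> \<le> \<epsilon>" by blast
qed

lemma admissible_image_cube:
  assumes "admissible d T"
  shows "\<exists>R'. T ` cube d R \<subseteq> cube d R'"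
proof -
  have "cube d R \<subseteq> Rvec d" by (auto simp: cube_def)
  then have "compact (T ` cube d R)" "T ` cube d R \<subseteq> Rvec d"
    using assms unfolding admissible_def
    by (auto intro: compact_continuous_image continuous_on_subset compact_cube)
  then show ?thesis using compact_subset_cube by metis
qed

lemma nn_approx_comp:
  assumes a1: "nn_approx d T1" and bounded: "\<And>R. \<exists>R'. T1 ` cube d R \<subseteq> cube d R'"
    and a2: "nn_approx d T2" and c2: "continuous_on (Rvec d) T2"
  shows "nn_approx d (T2 \<circ> T1)"
  unfolding nn_approx_def
proof (intro allI impI)
  fix R \<epsilon> :: real
  assume "\<epsilon> > 0"
  obtain R1 where R1: "T1 ` cube d R \<subseteq> cube d R1" using bounded by blast
  obtain \<delta> where "\<delta> > 0" and \<delta>: "\<And>x y i. x \<in> cube d (R1 + 1) \<Longrightarrow> y \<in> cube d (R1 + 1) \<Longrightarrow>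
      \<forall>j<d. \<bar>x j - y j\<bar> \<le> \<delta> \<Longrightarrow> i < d \<Longrightarrow> \<bar>T2 x i - T2 y i\<bar> < \<epsilon>/2"
    using cube_uniformly_continuous_coordinates[OF c2 half_gt_zero[OF \<open>\<epsilon> > 0\<close>]] by metis
  obtain g2 where g2: "g2 \<in> NN_LReLU d"
    "\<And>x i. x \<in> cube d (R1 + 1) \<Longrightarrow> i < d \<Longrightarrow> \<bar>T2 x i - g2 x i\<bar> \<le> \<epsilon>/2"
    using nn_approxE[OF a2 half_gt_zero[OF \<open>\<epsilon> > 0\<close>]] by metis
  obtain g1 where g1: "g1 \<in> NN_LReLU d"
    "\<And>x i. x \<in> cube d R \<Longrightarrow> i < d \<Longrightarrow> \<bar>T1 x i - g1 x i\<bar> \<le> min \<delta> 1"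
    using nn_approxE[OF a1, of "min \<delta> 1"] \<open>\<delta> > 0\<close> by auto
  have "\<bar>(T2 \<circ> T1) x i - (g2 \<circ> g1) x i\<bar> \<le> \<epsilon>" if x: "x \<in> cube d R" and "i < d" for x i
  proof -
    have T1x0: "T1 x \<in> cube d R1" using R1 x by blast
    then have T1x: "T1 x \<in> cube d (R1 + 1)" by (rule subsetD[OF cube_mono, rotated]) simp
    have "\<bar>g1 x j\<bar> \<le> R1 + 1" if "j < d" for j
    proof -
      have "\<bar>T1 x j\<bar> \<le> R1" using T1x0 that by (simp add: cube_def)
      then show ?thesis using g1(2)[OF x that] by linarith
    qed
    then have g1x: "g1 x \<in> cube d (R1 + 1)" using NN_LReLU_Rvec[OF g1(1)] by (simp add: cube_def)
    have "\<forall>j<d. \<bar>T1 x j - g1 x j\<bar> \<le> \<delta>" using g1(2)[OF x] by fastforce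
    then have "\<bar>T2 (T1 x) i - T2 (g1 x) i\<bar> < \<epsilon>/2" using \<delta>[OF T1x g1x _ \<open>i < d\<close>] by blast
    moreover have "\<bar>T2 (g1 x) i - g2 (g1 x) i\<bar> \<le> \<epsilon>/2" using g2(2)[OF g1x \<open>i < d\<close>] .
    ultimately show ?thesis unfolding comp_apply by linarith
  qed
  with NN_LReLU_comp[OF g2(1) g1(1)]
  show "\<exists>g\<in>NN_LReLU d. \<forall>x\<in>cube d R. \<forall>i<d. \<bar>(T2 \<circ> T1) x i - g x i\<bar> \<le> \<epsilon>"
    by blast
qed

lemma admissible_comp:
  assumes T1: "admissible d T1" and T2: "admissible d T2"
  shows "admissible d (T2 \<circ> T1)"
proof -
  have c1: "continuous_on (Rvec d) T1" and i1: "T1 ` Rvec d \<subseteq> Rvec d"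
    and c2: "continuous_on (Rvec d) T2" and i2: "T2 ` Rvec d \<subseteq> Rvec d"
    using T1 T2 by (simp_all add: admissible_def)
  have "nn_approx d (T2 \<circ> T1)"
    using T1 T2 admissible_image_cube[OF T1] by (intro nn_approx_comp) (auto simp: admissible_def)
  moreover have "continuous_on (Rvec d) (T2 \<circ> T1)"
    using continuous_on_compose[OF c1 continuous_on_subset[OF c2 i1]] .
  moreover have "(T2 \<circ> T1) ` Rvec d \<subseteq> Rvec d"
    using i1 i2 by (simp add: image_comp[symmetric] image_subset_iff)
  ultimately show ?thesis by (simp add: admissible_def)
qed

definition update_last :: "nat \<Rightarrow> ((nat \<Rightarrow> real) \<Rightarrow> real) \<Rightarrow> (nat \<Rightarrow> real) \<Rightarrow> (nat \<Rightarrow> real)" where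
  "update_last d F x = x(d - 1 := F x)"

lemma update_last_Rvec: "1 \<le> d \<Longrightarrow> x \<in> Rvec d \<Longrightarrow> update_last d F x \<in> Rvec d"
  by (auto simp: update_last_def Rvec_def)

lemma continuous_on_update_last:
  assumes "continuous_on (Rvec d) F"
  shows "continuous_on (Rvec d) (update_last d F)"
proof (rule continuous_on_coordinatewise_then_product)
  fix i
  show "continuous_on (Rvec d) (\<lambda>x. update_last d F x i)"
  proof (cases "i = d - 1")
    case True
    then show ?thesis using assms by (simp add: update_last_def)
  next
    case False
    then show ?thesis
      by (simp add: update_last_def continuous_on_coordinate)
  qed
qed

lemma admissible_update_last:
  "1 \<le> d \<Longrightarrow> continuous_on (Rvec d) F \<Longrightarrow> nn_approx d (update_last d F) \<Longrightarrow>
    admissible d (update_last d F)"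
  by (auto simp: admissible_def continuous_on_update_last update_last_Rvec)

definition slab :: "nat \<Rightarrow> real \<Rightarrow> (nat \<Rightarrow> real) set" where
  "slab d R = {x \<in> Rvec d. \<forall>i<d - 1. \<bar>x i\<bar> \<le> R}"

lemma cube_subset_slab: "cube d R \<subseteq> slab d R"
  by (auto simp: cube_def slab_def)

lemma update_last_slab: "1 \<le> d \<Longrightarrow> x \<in> slab d R \<Longrightarrow> update_last d F x \<in> slab d R"
  by (auto simp: slab_def update_last_def Rvec_def)

text \<open>Exactness is only asked for on slabs, which bound the first \<open>d - 1\<close> coordinates: a
  network can shift these into the positive orthant where LReLU is linear, while the last
  coordinate stays unrestricted, so that exact maps of it can be composed.\<close>

definition nn_exact :: "nat \<Rightarrow> ((nat \<Rightarrow> real) \<Rightarrow> (nat \<Rightarrow> real)) \<Rightarrow> bool" where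
  "nn_exact d T \<longleftrightarrow> (\<forall>R. \<exists>g\<in>NN_LReLU d. \<forall>x\<in>slab d R. g x = T x)"

lemma nn_exact_imp_nn_approx: "nn_exact d T \<Longrightarrow> nn_approx d T"
  unfolding nn_exact_def nn_approx_def
  by (metis cube_subset_slab subsetD diff_self abs_zero order_less_imp_le)

lemma nn_exact_comp_update_last:
  assumes "1 \<le> d" "nn_exact d (update_last d F)" "nn_exact d T"
  shows "nn_exact d (T \<circ> update_last d F)"
  unfolding nn_exact_def
proof
  fix R
  obtain g1 where g1: "g1 \<in> NN_LReLU d" "\<And>x. x \<in> slab d R \<Longrightarrow> g1 x = update_last d F x"
    using assms(2) unfolding nn_exact_def by blast
  obtain g2 where g2: "g2 \<in> NN_LReLU d" "\<And>x. x \<in> slab d R \<Longrightarrow> g2 x = T x"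
    using assms(3) unfolding nn_exact_def by blast
  have "(g2 \<circ> g1) x = (T \<circ> update_last d F) x" if "x \<in> slab d R" for x
    using g1(2)[OF that] g2(2)[OF update_last_slab[OF assms(1) that]] by simp
  with NN_LReLU_comp[OF g2(1) g1(1)]
  show "\<exists>g\<in>NN_LReLU d. \<forall>x\<in>slab d R. g x = (T \<circ> update_last d F) x" by blast
qed

lemma nn_exact_update_last_affine:
  assumes "1 \<le> d"
  shows "nn_exact d (update_last d (\<lambda>x. (\<Sum>j<d. a j * x j) + c))"
  unfolding nn_exact_def
proof
  fix R
  let ?A = "\<lambda>i j. if i = d - 1 then a j else if i = j then 1 else 0"
  let ?b = "\<lambda>i. if i = d - 1 then c else 0"
  have "aff ?A ?b d d x = update_last d (\<lambda>x. (\<Sum>j<d. a j * x j) + c) x" if "x \<in> slab d R" for x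
  proof (rule Rvec_eqI)
    show "aff ?A ?b d d x \<in> Rvec d" by (rule NN_LReLU_Rvec[OF aff_in_NN_LReLU])
    show "update_last d (\<lambda>x. (\<Sum>j<d. a j * x j) + c) x \<in> Rvec d"
      using that assms by (intro update_last_Rvec) (auto simp: slab_def)
  qed (auto simp: aff_def update_last_def if_distrib[of "\<lambda>u. u * _"] cong: if_cong)
  then show "\<exists>g\<in>NN_LReLU d. \<forall>x\<in>slab d R. g x = update_last d (\<lambda>x. (\<Sum>j<d. a j * x j) + c) x"
    using aff_in_NN_LReLU by blast
qed

lemma nn_exact_update_last_scale:
  assumes "1 \<le> d"
  shows "nn_exact d (update_last d (\<lambda>x. \<alpha> * x (d - 1) + c))"
proof -
  have "(\<Sum>j<d. (if j = d - 1 then \<alpha> else 0) * x j) = \<alpha> * x (d - 1)" for x :: "nat \<Rightarrow> real"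
    using assms by (simp add: if_distrib[of "\<lambda>u. u * _"] cong: if_cong)
  then show ?thesis
    using nn_exact_update_last_affine[OF assms, of "\<lambda>j. if j = d - 1 then \<alpha> else 0" c] by simp
qed

lemma nn_exact_update_last_add_coord:
  assumes "1 \<le> d" "j < d - 1"
  shows "nn_exact d (update_last d (\<lambda>x. x (d - 1) + x j))"
proof -
  have "(\<Sum>k<d. ((if k = d - 1 then 1 else 0) + (if k = j then 1 else 0)) * x k) = x (d - 1) + x j"
    for x :: "nat \<Rightarrow> real"
    using assms by (simp add: distrib_right sum.distrib if_distrib[of "\<lambda>u. u * _"]
        cong: if_cong)
  then show ?thesis
    using nn_exact_update_last_affine[OF assms(1),
        of "\<lambda>k. (if k = d - 1 then 1 else 0) + (if k = j then 1 else 0)" 0] by simp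
qed

definition relu :: "real \<Rightarrow> real" where
  "relu u = max u 0"

lemma continuous_on_relu [continuous_intros]:
  "continuous_on S f \<Longrightarrow> continuous_on S (\<lambda>x. relu (f x))"
  unfolding relu_def by (intro continuous_intros)

lemma relu_lipschitz: "\<bar>relu a - relu b\<bar> \<le> \<bar>a - b\<bar>"
  unfolding relu_def by linarith

lemma relu_mult_pos: "c > 0 \<Longrightarrow> relu (c * a) = c * relu a"
  by (auto simp: relu_def max_def mult_le_0_iff)

text \<open>The first \<open>d - 1\<close> coordinates are shifted into the positive orthant, where
  LReLU is the identity; on the last coordinate LReLU with slope \<open>1/(1 + c)\<close> followed by the
  factor \<open>1 + c\<close> is \<open>y \<mapsto> y + c relu y\<close>.\<close>

lemma nn_exact_update_last_kink:
  assumes d: "1 \<le> d" and c: "c > -1"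
  shows "nn_exact d (update_last d (\<lambda>x. x (d - 1) + c * relu (x (d - 1))))"
  unfolding nn_exact_def
proof
  fix R0 :: real
  define R where "R = max R0 0"
  let ?h = "aff (\<lambda>i j. if i = j then 1 else 0) (\<lambda>i. if i < d - 1 then R else 0) d d"
  let ?a = "aff (\<lambda>i j. if i = j then (if i = d - 1 then 1 + c else 1) else 0)
                (\<lambda>i. if i < d - 1 then -R else 0) d d"
  let ?g = "?a \<circ> lrelu (1 / (1 + c)) \<circ> ?h"
  have "?g \<in> NN_LReLU d"
    using d by (auto simp: NN_LReLU_def intro: nn_pre.step nn_pre.first)
  moreover have "?g x = update_last d (\<lambda>x. x (d - 1) + c * relu (x (d - 1))) x"
    if x: "x \<in> slab d R0" for x
  proof (rule Rvec_eqI)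
    show "?g x \<in> Rvec d" using \<open>?g \<in> NN_LReLU d\<close> by (rule NN_LReLU_Rvec)
    show "update_last d (\<lambda>x. x (d - 1) + c * relu (x (d - 1))) x \<in> Rvec d"
      using x d by (intro update_last_Rvec) (auto simp: slab_def)
  next
    fix i assume "i < d"
    have "1 + c \<noteq> 0" using c by simp
    show "?g x i = update_last d (\<lambda>x. x (d - 1) + c * relu (x (d - 1))) x i"
    proof (cases "i = d - 1")
      case True
      then show ?thesis using \<open>i < d\<close> \<open>1 + c \<noteq> 0\<close>
        by (auto simp: aff_diagonal lrelu_def update_last_def relu_def) (simp add: distrib_right)
    next
      case False
      then have "i < d - 1" using \<open>i < d\<close> by simp
      then have "x i + R \<ge> 0" using x by (auto simp: slab_def R_def abs_le_iff)
      then show ?thesis using False \<open>i < d - 1\<close>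
        by (auto simp: aff_diagonal lrelu_def update_last_def)
    qed
  qed
  ultimately show "\<exists>g\<in>NN_LReLU d. \<forall>x\<in>slab d R0.
      g x = update_last d (\<lambda>x. x (d - 1) + c * relu (x (d - 1))) x"
    by blast
qed

subsection \<open>Monotone maps of the last coordinate\<close>

definition nn_exact_last :: "nat \<Rightarrow> (real \<Rightarrow> real) \<Rightarrow> bool" where
  "nn_exact_last d \<phi> \<longleftrightarrow> nn_exact d (update_last d (\<lambda>x. \<phi> (x (d - 1))))"

lemma nn_exact_last_comp:
  assumes "1 \<le> d" "nn_exact_last d \<phi>" "nn_exact_last d \<psi>"
  shows "nn_exact_last d (\<psi> \<circ> \<phi>)"
proof -
  have "update_last d (\<lambda>x. \<psi> (x (d - 1))) \<circ> update_last d (\<lambda>x. \<phi> (x (d - 1))) =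
      update_last d (\<lambda>x. (\<psi> \<circ> \<phi>) (x (d - 1)))"
    by (auto simp: update_last_def)
  then show ?thesis
    using nn_exact_comp_update_last assms unfolding nn_exact_last_def by metis
qed

lemma nn_exact_last_affine: "1 \<le> d \<Longrightarrow> nn_exact_last d (\<lambda>y. \<alpha> * y + c)"
  unfolding nn_exact_last_def by (rule nn_exact_update_last_scale)

lemma nn_exact_last_kink:
  assumes d: "1 \<le> d" and c: "c > -1"
  shows "nn_exact_last d (\<lambda>y. y + c * relu (y - t))"
proof -
  have "nn_exact_last d (\<lambda>y. y + c * relu y)"
    unfolding nn_exact_last_def by (rule nn_exact_update_last_kink[OF d c])
  then have "nn_exact_last d ((\<lambda>y. 1 * y + t) \<circ> (\<lambda>y. y + c * relu y) \<circ> (\<lambda>y. 1 * y + - t))"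
    using d nn_exact_last_affine nn_exact_last_comp by metis
  then show ?thesis by (simp add: comp_def)
qed

lemma strict_mono_kink:
  assumes "c > -1"
  shows "strict_mono (\<lambda>y. y + c * relu (y - t))"
proof
  fix y z :: real
  assume "y < z"
  define D where "D = relu (z - t) - relu (y - t)"
  have D: "0 \<le> D" "D \<le> z - y" using \<open>y < z\<close> by (auto simp: D_def relu_def max_def)
  have "c * D > - (z - y)"
  proof (cases "c \<ge> 0")
    case True
    then show ?thesis using D \<open>y < z\<close> by (smt (verit) mult_nonneg_nonneg)
  next
    case False
    then have "c * D \<ge> c * (z - y)" using D by (intro mult_left_mono_neg) auto
    moreover have "(1 + c) * (z - y) > 0" using assms \<open>y < z\<close> by simp
    ultimately show ?thesis by (simp add: algebra_simps)
  qed
  then show "y + c * relu (y - t) < z + c * relu (z - t)" by (simp add: D_def algebra_simps)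
qed

lemma kink_changes_slope:
  assumes "s > 0" and lin: "\<And>y. y \<ge> a \<Longrightarrow> P y = v + s * (y - a)" and "y \<ge> a"
  shows "P y + (\<sigma> / s - 1) * relu (P y - v) = v + \<sigma> * (y - a)"
proof -
  have Py: "P y = v + s * (y - a)" using lin \<open>y \<ge> a\<close> .
  then have "relu (P y - v) = s * (y - a)" using \<open>y \<ge> a\<close> \<open>s > 0\<close> by (simp add: relu_def)
  then have "P y + (\<sigma> / s - 1) * relu (P y - v) = v + s * (y - a) + (\<sigma> / s - 1) * (s * (y - a))"
    using Py by simp
  also have "\<dots> = v + \<sigma> * (y - a)" using \<open>s > 0\<close> by (simp add: field_simps)
  finally show ?thesis .
qed

text \<open>Each step composes with one kink placed at the value of the current right end node, which
  changes the slope beyond that node and leaves the values at the earlier nodes untouched.\<close>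

lemma nn_exact_last_interpolant:
  fixes b :: "nat \<Rightarrow> real" and \<psi> :: "real \<Rightarrow> real" and n :: nat
  assumes d: "1 \<le> d" and b: "strict_mono b" and \<psi>: "strict_mono \<psi>"
  shows "\<exists>P s. nn_exact_last d P \<and> strict_mono P \<and> (\<forall>j\<le>n. P (b j) = \<psi> (b j)) \<and>
           s > 0 \<and> (\<forall>y\<ge>b n. P y = \<psi> (b n) + s * (y - b n))"
proof (induction n)
  case 0
  have "nn_exact_last d (\<lambda>y. 1 * y + (\<psi> (b 0) - b 0))" by (rule nn_exact_last_affine[OF d])
  moreover have "strict_mono (\<lambda>y. 1 * y + (\<psi> (b 0) - b 0))" by (rule strict_monoI) simp
  ultimately show ?case by (intro exI[of _ "\<lambda>y. 1 * y + (\<psi> (b 0) - b 0)"] exI[of _ 1]) auto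
next
  case (Suc n)
  then obtain P s where P: "nn_exact_last d P" "strict_mono P" "\<forall>j\<le>n. P (b j) = \<psi> (b j)"
    and s: "s > 0" and right: "\<forall>y\<ge>b n. P y = \<psi> (b n) + s * (y - b n)"
    by blast
  have gap: "b n < b (Suc n)" using strict_monoD[OF b] by simp
  define \<sigma> where "\<sigma> = (\<psi> (b (Suc n)) - \<psi> (b n)) / (b (Suc n) - b n)"
  have \<sigma>: "\<sigma> > 0" using gap strict_monoD[OF \<psi> gap] by (simp add: \<sigma>_def)
  have c: "\<sigma> / s - 1 > -1" using \<sigma> s by simp
  define P' where "P' = (\<lambda>z. z + (\<sigma> / s - 1) * relu (z - \<psi> (b n))) \<circ> P"
  have "nn_exact_last d P'"
    unfolding P'_def by (rule nn_exact_last_comp[OF d P(1) nn_exact_last_kink[OF d c]])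
  moreover have "strict_mono P'"
    using strict_monoD[OF strict_mono_kink[OF c]] strict_monoD[OF P(2)]
    unfolding P'_def by (intro strict_monoI) simp
  moreover have right': "P' y = \<psi> (b n) + \<sigma> * (y - b n)" if "y \<ge> b n" for y
    unfolding P'_def comp_apply using kink_changes_slope[OF s _ that] right by blast
  moreover have "P' (b j) = \<psi> (b j)" if "j \<le> Suc n" for j
  proof (cases "j = Suc n")
    case True
    then show ?thesis using right'[of "b (Suc n)"] gap by (simp add: \<sigma>_def)
  next
    case False
    then have "j \<le> n" using that by simp
    then have "P (b j) \<le> \<psi> (b n)"
      using P(3) strict_mono_mono[OF P(2)] strict_mono_mono[OF b] by (metis order.refl monoD)
    then show ?thesis using P(3) \<open>j \<le> n\<close> by (simp add: P'_def relu_def)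
  qed
  moreover have "\<forall>y\<ge>b (Suc n). P' y = \<psi> (b (Suc n)) + \<sigma> * (y - b (Suc n))"
    using right' gap by (simp add: \<sigma>_def field_simps)
  ultimately show ?case using \<sigma> by blast
qed

lemma ex_grid_cell:
  fixes b :: "nat \<Rightarrow> real"
  assumes "b 0 \<le> y" "y \<le> b n" "0 < n"
  shows "\<exists>j<n. b j \<le> y \<and> y \<le> b (Suc j)"
  using assms(2,3)
proof (induction n)
  case (Suc n)
  show ?case
  proof (cases "0 < n \<and> y \<le> b n")
    case True
    then show ?thesis using Suc.IH by (meson less_SucI)
  next
    case False
    then have "b n \<le> y" using assms(1) by (cases "n = 0") auto
    then show ?thesis using Suc.prems(1) by blast
  qed
qed simp

lemma ex_grid_spacing:
  assumes "\<eta> > 0" obtains K where "0 < K" "2 * R / real K \<le> \<eta>"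
proof
  define K where "K = nat \<lceil>2 * R / \<eta>\<rceil> + 1"
  show "0 < K" by (simp add: K_def)
  have "2 * R / \<eta> \<le> real K" unfolding K_def using real_nat_ceiling_ge[of "2 * R / \<eta>"] by linarith
  then have "2 * R \<le> real K * \<eta>" using assms by (simp add: pos_divide_le_eq)
  then show "2 * R / real K \<le> \<eta>"
    using \<open>0 < K\<close> by (subst pos_divide_le_eq) (simp_all add: mult.commute)
qed

lemma monotone_interpolation_error:
  fixes P \<psi> :: "real \<Rightarrow> real" and b :: "nat \<Rightarrow> real"
  assumes "mono P" "mono \<psi>" and node: "\<forall>j\<le>n. P (b j) = \<psi> (b j)"
    and osc: "\<forall>j<n. \<psi> (b (Suc j)) - \<psi> (b j) \<le> \<epsilon>" and "b 0 \<le> y" "y \<le> b n" "0 < n"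
  shows "\<bar>\<psi> y - P y\<bar> \<le> \<epsilon>"
proof -
  obtain j where "j < n" and cell: "b j \<le> y" "y \<le> b (Suc j)"
    using ex_grid_cell[of b y n] assms(5-7) by blast
  have "P (b j) \<le> P y" "P y \<le> P (b (Suc j))" "\<psi> (b j) \<le> \<psi> y" "\<psi> y \<le> \<psi> (b (Suc j))"
    using cell assms(1,2) by (auto simp: mono_def)
  moreover have "P (b j) = \<psi> (b j)" "P (b (Suc j)) = \<psi> (b (Suc j))" "\<psi> (b (Suc j)) - \<psi> (b j) \<le> \<epsilon>"
    using node osc \<open>j < n\<close> by auto
  ultimately show ?thesis by linarith
qed

lemma monotone_interpolant_approx:
  fixes \<psi> :: "real \<Rightarrow> real"
  assumes d: "1 \<le> d" and mono: "strict_mono \<psi>" and cont: "continuous_on UNIV \<psi>" and "\<epsilon> > 0"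
  obtains P where "nn_exact_last d P" "\<And>y. \<bar>y\<bar> \<le> R \<Longrightarrow> \<bar>\<psi> y - P y\<bar> \<le> \<epsilon>"
proof -
  define R' where "R' = \<bar>R\<bar> + 1"
  have "uniformly_continuous_on {-R'..R'} \<psi>"
    by (rule compact_uniformly_continuous[OF continuous_on_subset[OF cont]]) auto
  then obtain e where "e > 0"
    and e: "\<forall>u\<in>{-R'..R'}. \<forall>v\<in>{-R'..R'}. dist v u < e \<longrightarrow> dist (\<psi> v) (\<psi> u) < \<epsilon>"
    unfolding uniformly_continuous_on_def using \<open>\<epsilon> > 0\<close> by blast
  obtain n where "0 < n" and spacing: "2 * R' / real n \<le> e / 2"
    using ex_grid_spacing[of "e / 2" R'] \<open>e > 0\<close> by auto
  define h where "h = 2 * R' / real n"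
  have "h > 0" using \<open>0 < n\<close> by (simp add: h_def R'_def add_nonneg_pos)
  define b where "b j = - R' + real j * h" for j
  have "strict_mono b" using \<open>h > 0\<close> by (intro strict_monoI) (simp add: b_def)
  then obtain P where P: "nn_exact_last d P" "strict_mono P" "\<forall>j\<le>n. P (b j) = \<psi> (b j)"
    using nn_exact_last_interpolant[OF d _ mono] by blast
  have b0: "b 0 = - R'" and bn: "b n = R'" using \<open>0 < n\<close> by (simp_all add: b_def h_def)
  have b_range: "b k \<in> {-R'..R'}" if "k \<le> n" for k
    using strict_mono_less_eq[OF \<open>strict_mono b\<close>, of 0 k] strict_mono_less_eq[OF \<open>strict_mono
        b\<close>, of k n]
      that b0 bn by simp
  have "\<psi> (b (Suc j)) - \<psi> (b j) \<le> \<epsilon>" if "j < n" for j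
  proof -
    have "b j \<in> {-R'..R'}" "b (Suc j) \<in> {-R'..R'}" using b_range that by simp_all
    moreover have "b (Suc j) - b j = h" by (simp add: b_def algebra_simps)
    then have "dist (b (Suc j)) (b j) < e"
      using spacing \<open>e > 0\<close> \<open>h > 0\<close> by (simp add: h_def[symmetric] dist_real_def)
    ultimately show ?thesis using e by (metis abs_less_iff dist_real_def less_imp_le)
  qed
  then have "\<bar>\<psi> y - P y\<bar> \<le> \<epsilon>" if "\<bar>y\<bar> \<le> R" for y
    using that b0 bn \<open>0 < n\<close> strict_mono_mono[OF P(2)] strict_mono_mono[OF mono] P(3)
    by (intro monotone_interpolation_error[of P \<psi> n b]) (auto simp: R'_def)
  with P(1) show thesis by (rule that)
qed

lemma admissible_update_last_monotone:
  assumes d: "1 \<le> d" and mono: "strict_mono \<psi>" and cont: "continuous_on UNIV \<psi>"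
  shows "admissible d (update_last d (\<lambda>x. \<psi> (x (d - 1))))"
proof (rule admissible_update_last[OF d])
  show "continuous_on (Rvec d) (\<lambda>x. \<psi> (x (d - 1)))"
    by (rule continuous_on_compose2[OF cont continuous_on_coordinate]) auto
  show "nn_approx d (update_last d (\<lambda>x. \<psi> (x (d - 1))))"
  proof (rule nn_approx_limit)
    fix R \<epsilon> :: real
    assume "\<epsilon> > 0"
    then obtain P where P: "nn_exact_last d P" and close: "\<And>y. \<bar>y\<bar> \<le> R \<Longrightarrow> \<bar>\<psi> y - P y\<bar> \<le> \<epsilon>"
      using monotone_interpolant_approx[OF d mono cont] by metis
    from P have "nn_approx d (update_last d (\<lambda>x. P (x (d - 1))))"
      unfolding nn_exact_last_def by (rule nn_exact_imp_nn_approx)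
    moreover have
      "\<bar>update_last d (\<lambda>x. \<psi> (x (d - 1))) x i - update_last d (\<lambda>x. P (x (d - 1))) x i\<bar> \<le> \<epsilon>"
      if "x \<in> cube d R" for x i
      using close[of "x (d - 1)"] that d \<open>\<epsilon> > 0\<close> by (simp add: cube_def update_last_def)
    ultimately show "\<exists>T'. nn_approx d T' \<and>
        (\<forall>x\<in>cube d R. \<forall>i<d. \<bar>update_last d (\<lambda>x. \<psi> (x (d - 1))) x i - T' x i\<bar> \<le> \<epsilon>)"
      by blast
  qed
qed

subsection \<open>Shears of the last coordinate\<close>

definition indep_last :: "nat \<Rightarrow> ((nat \<Rightarrow> real) \<Rightarrow> real) \<Rightarrow> bool" where
  "indep_last d G \<longleftrightarrow> (\<forall>x v. G (x(d - 1 := v)) = G x)"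

definition shear_last :: "nat \<Rightarrow> ((nat \<Rightarrow> real) \<Rightarrow> real) \<Rightarrow> (nat \<Rightarrow> real) \<Rightarrow> (nat \<Rightarrow> real)" where
  "shear_last d G = update_last d (\<lambda>x. x (d - 1) + G x)"

definition shear_admissible :: "nat \<Rightarrow> ((nat \<Rightarrow> real) \<Rightarrow> real) \<Rightarrow> bool" where
  "shear_admissible d G \<longleftrightarrow>
     indep_last d G \<and> continuous_on (Rvec d) G \<and> nn_approx d (shear_last d G)"

lemma admissible_shear_last: "1 \<le> d \<Longrightarrow> shear_admissible d G \<Longrightarrow> admissible d (shear_last d G)"
  unfolding shear_admissible_def shear_last_def
  by (intro admissible_update_last continuous_intros) auto

lemma shear_last_comp:
  "indep_last d G2 \<Longrightarrow> shear_last d G2 \<circ> shear_last d G1 = shear_last d (\<lambda>x. G1 x + G2 x)"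
  by (rule ext) (simp add: shear_last_def update_last_def indep_last_def add.assoc)

lemma shear_admissible_add:
  assumes d: "1 \<le> d" and G1: "shear_admissible d G1" and G2: "shear_admissible d G2"
  shows "shear_admissible d (\<lambda>x. G1 x + G2 x)"
proof -
  have "admissible d (shear_last d G2 \<circ> shear_last d G1)"
    using d G1 G2 by (intro admissible_comp admissible_shear_last)
  then have "nn_approx d (shear_last d (\<lambda>x. G1 x + G2 x))"
    using G2 shear_last_comp by (simp add: admissible_def shear_admissible_def)
  with G1 G2 show ?thesis
    by (auto simp: shear_admissible_def indep_last_def intro: continuous_on_add)
qed

lemma shear_admissible_const:
  assumes "1 \<le> d" shows "shear_admissible d (\<lambda>x. c)"
proof -
  have "shear_last d (\<lambda>x. c) = update_last d (\<lambda>x. 1 * x (d - 1) + c)"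
    by (simp add: shear_last_def)
  then show ?thesis
    using nn_exact_imp_nn_approx[OF nn_exact_update_last_scale[OF assms, of 1 c]]
    by (simp add: shear_admissible_def indep_last_def)
qed

lemma shear_admissible_coordinate:
  assumes "1 \<le> d" "j < d - 1" shows "shear_admissible d (\<lambda>x. x j)"
  using nn_exact_imp_nn_approx[OF nn_exact_update_last_add_coord[OF assms]] assms(2)
  by (simp add: shear_admissible_def indep_last_def shear_last_def continuous_on_coordinate)

lemma admissible_update_last_scale:
  "1 \<le> d \<Longrightarrow> admissible d (update_last d (\<lambda>x. \<alpha> * x (d - 1)))"
  using nn_exact_imp_nn_approx[OF nn_exact_update_last_scale, of d \<alpha> 0]
  by (intro admissible_update_last continuous_intros) auto

lemma shear_admissible_scale:
  assumes d: "1 \<le> d" and G: "shear_admissible d G"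
  shows "shear_admissible d (\<lambda>x. c * G x)"
proof (cases "c = 0")
  case True
  then show ?thesis using shear_admissible_const[OF d, of 0] by simp
next
  case False
  have indep: "indep_last d G" using G by (simp add: shear_admissible_def)
  have "update_last d (\<lambda>x. c * x (d - 1)) \<circ> shear_last d G \<circ>
      update_last d (\<lambda>x. (1 / c) * x (d - 1)) = shear_last d (\<lambda>x. c * G x)"
  proof
    fix x
    have "G (x(d - 1 := v)) = G x" for v using indep by (simp add: indep_last_def)
    then show "(update_last d (\<lambda>x. c * x (d - 1)) \<circ> shear_last d G \<circ>
        update_last d (\<lambda>x. (1 / c) * x (d - 1))) x = shear_last d (\<lambda>x. c * G x) x"
      using False by (simp add: shear_last_def update_last_def distrib_left)
  qed
  moreover have "admissible d (update_last d (\<lambda>x. c * x (d - 1)) \<circ> shear_last d G \<circ>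
      update_last d (\<lambda>x. (1 / c) * x (d - 1)))"
    using d G by (intro admissible_comp admissible_update_last_scale admissible_shear_last)
  ultimately show ?thesis
    using G by (auto simp: admissible_def shear_admissible_def indep_last_def
        intro: continuous_on_mult_left)
qed

lemma admissible_update_last_kink:
  "1 \<le> d \<Longrightarrow> c > -1 \<Longrightarrow> admissible d (update_last d (\<lambda>x. x (d - 1) + c * relu (x (d - 1))))"
  by (intro admissible_update_last nn_exact_imp_nn_approx nn_exact_update_last_kink
      continuous_intros)

lemma shear_conjugate_kink:
  assumes indep: "indep_last d G" and "N > 0"
  shows "shear_last d (\<lambda>x. (- N) * G x) \<circ>
      update_last d (\<lambda>x. x (d - 1) + (1 / N) * relu (x (d - 1))) \<circ> shear_last d (\<lambda>x. N * G x) =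
    shear_last d (\<lambda>x. relu (x (d - 1) / N + G x))" (is "?L = ?R")
proof
  fix x
  have "G (x(d - 1 := v)) = G x" for v using indep by (simp add: indep_last_def)
  moreover have "(1 / N) * relu (x (d - 1) + N * G x) = relu (x (d - 1) / N + G x)"
    using \<open>N > 0\<close> relu_mult_pos[of "1 / N" "x (d - 1) + N * G x"] by (simp add: field_simps)
  ultimately show "?L x = ?R x"
    by (simp add: shear_last_def update_last_def)
qed

text \<open>For large \<open>N\<close> the shear by \<open>relu (x\<^sub>l\<^sub>a\<^sub>s\<^sub>t / N + G x)\<close> is uniformly close to the shear by
  \<open>relu (G x)\<close> on a cube.\<close>

lemma shear_admissible_relu:
  assumes d: "1 \<le> d" and G: "shear_admissible d G"
  shows "shear_admissible d (\<lambda>x. relu (G x))"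
proof -
  have indep: "indep_last d G" and cont: "continuous_on (Rvec d) G"
    using G by (simp_all add: shear_admissible_def)
  have "nn_approx d (shear_last d (\<lambda>x. relu (G x)))"
  proof (rule nn_approx_limit)
    fix R \<epsilon> :: real
    assume "\<epsilon> > 0"
    define N where "N = \<bar>R\<bar> / \<epsilon> + 1"
    have N: "N > 0" "\<bar>R\<bar> / N \<le> \<epsilon>"
      using \<open>\<epsilon> > 0\<close> by (auto simp: N_def add_nonneg_pos field_simps)
    have "1 / N > -1" using N(1) by (simp add: less_trans[OF _ divide_pos_pos])
    then have "admissible d (shear_last d (\<lambda>x. (- N) * G x) \<circ>
        update_last d (\<lambda>x. x (d - 1) + (1 / N) * relu (x (d - 1))) \<circ> shear_last d (\<lambda>x. N * G x))"
      using d G by (intro admissible_comp admissible_shear_last shear_admissible_scale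
          admissible_update_last_kink)
    then have "nn_approx d (shear_last d (\<lambda>x. relu (x (d - 1) / N + G x)))"
      unfolding shear_conjugate_kink[OF indep N(1)] admissible_def by blast
    moreover have "\<bar>shear_last d (\<lambda>x. relu (G x)) x i - shear_last d (\<lambda>x. relu (x (d - 1) / N +
        G x)) x i\<bar> \<le> \<epsilon>"
      if "x \<in> cube d R" for x i
    proof -
      have "\<bar>x (d - 1)\<bar> \<le> R" using that d by (simp add: cube_def)
      then have "\<bar>x (d - 1)\<bar> / N \<le> \<bar>R\<bar> / N" using N(1) by (simp add: divide_right_mono)
      then have "\<bar>x (d - 1) / N\<bar> \<le> \<epsilon>" using N by (simp add: abs_div)
      then have "\<bar>relu (G x) - relu (x (d - 1) / N + G x)\<bar> \<le> \<epsilon>"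
        using relu_lipschitz[of "G x" "x (d - 1) / N + G x"] by linarith
      then show ?thesis using \<open>\<epsilon> > 0\<close> by (simp add: shear_last_def update_last_def)
    qed
    ultimately show "\<exists>T'. nn_approx d T' \<and>
        (\<forall>x\<in>cube d R. \<forall>i<d. \<bar>shear_last d (\<lambda>x. relu (G x)) x i - T' x i\<bar> \<le> \<epsilon>)"
      by blast
  qed
  with indep cont show ?thesis
    by (auto simp: shear_admissible_def indep_last_def intro: continuous_on_relu)
qed

lemma shear_admissible_max:
  assumes "1 \<le> d" "shear_admissible d F" "shear_admissible d G"
  shows "shear_admissible d (\<lambda>x. max (F x) (G x))"
proof -
  have "shear_admissible d (\<lambda>x. F x + relu (G x + (-1) * F x))"
    using assms by (intro shear_admissible_add shear_admissible_relu shear_admissible_scale)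
  moreover have "(\<lambda>x. F x + relu (G x + (-1) * F x)) = (\<lambda>x. max (F x) (G x))"
    by (auto simp: relu_def max_def)
  ultimately show ?thesis by simp
qed

lemma shear_admissible_abs:
  assumes "1 \<le> d" "shear_admissible d F"
  shows "shear_admissible d (\<lambda>x. \<bar>F x\<bar>)"
proof -
  have "shear_admissible d (\<lambda>x. max (F x) ((-1) * F x))"
    using assms by (intro shear_admissible_max shear_admissible_scale)
  moreover have "(\<lambda>x. max (F x) ((-1) * F x)) = (\<lambda>x. \<bar>F x\<bar>)"
    by (auto simp: abs_if max_def)
  ultimately show ?thesis by simp
qed

lemma shear_admissible_Max:
  assumes d: "1 \<le> d" and "finite P" "P \<noteq> {}" and "\<And>p. p \<in> P \<Longrightarrow> shear_admissible d (F p)"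
  shows "shear_admissible d (\<lambda>x. Max ((\<lambda>p. F p x) ` P))"
  using assms(2-4)
proof (induction P rule: finite_ne_induct)
  case (singleton p)
  then show ?case by simp
next
  case (insert p P)
  then have "shear_admissible d (\<lambda>x. max (F p x) (Max ((\<lambda>p. F p x) ` P)))"
    using d by (intro shear_admissible_max) auto
  with insert show ?case by simp
qed

subsection \<open>Every continuous shear is approximable\<close>

lemma cone_envelope_approx:
  fixes G :: "'a \<Rightarrow> real" and D :: "'a \<Rightarrow> 'a \<Rightarrow> real"
  assumes "finite P" and p0: "p0 \<in> P" "D p0 x \<le> \<delta> / 2"
    and close: "\<And>p. p \<in> P \<Longrightarrow> D p x \<le> \<delta> \<Longrightarrow> \<bar>G x - G p\<bar> \<le> \<epsilon>"
    and bound: "\<And>p. p \<in> P \<Longrightarrow> \<bar>G p\<bar> \<le> B" "\<bar>G x\<bar> \<le> B"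
    and C: "2 * B \<le> C * (\<delta> / 2)" "C \<ge> 0" and "\<delta> > 0"
  shows "\<bar>G x - Max ((\<lambda>p. G p + (- C) * relu (D p x + - (\<delta> / 2))) ` P)\<bar> \<le> \<epsilon>"
proof -
  define cone where "cone p = G p + (- C) * relu (D p x + - (\<delta> / 2))" for p
  have "cone p0 = G p0" using p0(2) by (simp add: cone_def relu_def)
  moreover have "cone p0 \<le> Max (cone ` P)" using \<open>finite P\<close> p0(1) by simp
  moreover have "\<bar>G x - G p0\<bar> \<le> \<epsilon>" using close[OF p0(1)] p0(2) \<open>\<delta> > 0\<close> by simp
  ultimately have lower: "G x - \<epsilon> \<le> Max (cone ` P)" and "\<epsilon> \<ge> 0" by linarith+
  obtain p where p: "p \<in> P" "Max (cone ` P) = cone p"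
    using Max_in[of "cone ` P"] \<open>finite P\<close> p0(1) by fastforce
  have "cone p \<le> G x + \<epsilon>"
  proof (cases "D p x \<le> \<delta>")
    case True
    have "cone p \<le> G p" using C(2) by (simp add: cone_def relu_def)
    then show ?thesis using close[OF p(1) True] by linarith
  next
    case False
    then have "\<delta> / 2 \<le> relu (D p x + - (\<delta> / 2))" by (simp add: relu_def le_max_iff_disj)
    then have "C * (\<delta> / 2) \<le> C * relu (D p x + - (\<delta> / 2))" using C(2) by (rule mult_left_mono)
    then have "cone p \<le> G p - 2 * B" using C(1) by (simp add: cone_def)
    then show ?thesis using bound(1)[OF p(1)] bound(2) \<open>\<epsilon> \<ge> 0\<close> by linarith
  qed
  with lower p(2) show ?thesis unfolding cone_def[symmetric] by linarith
qed

definition grid :: "nat \<Rightarrow> real \<Rightarrow> nat \<Rightarrow> (nat \<Rightarrow> real) set" where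
  "grid m R K =
     (\<lambda>\<kappa> i. if i < m then - R + real (\<kappa> i) * (2 * R / real K) else 0) ` PiE {..<m} (\<lambda>_. {..K})"

lemma finite_grid: "finite (grid m R K)"
  by (simp add: grid_def finite_PiE)

lemma grid_subset_cube:
  assumes "0 \<le> R" shows "grid m R K \<subseteq> cube m R"
proof
  fix p assume "p \<in> grid m R K"
  then obtain \<kappa> where \<kappa>: "\<kappa> \<in> PiE {..<m} (\<lambda>_. {..K})"
    and p: "p = (\<lambda>i. if i < m then - R + real (\<kappa> i) * (2 * R / real K) else 0)"
    by (auto simp: grid_def)
  have "\<bar>p i\<bar> \<le> R" if "i < m" for i
  proof -
    have "real (\<kappa> i) \<le> real K" using \<kappa> that by (auto simp: PiE_def Pi_def)
    then have "real (\<kappa> i) * (2 * R / real K) \<le> 2 * R"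
      using assms by (cases "K = 0") (auto simp: field_simps mult_left_mono)
    moreover have "0 \<le> real (\<kappa> i) * (2 * R / real K)" using assms by simp
    ultimately show ?thesis using that by (simp add: p abs_le_iff)
  qed
  then show "p \<in> cube m R" by (simp add: cube_def Rvec_def p)
qed

lemma grid_dense:
  assumes "0 < K" and x: "\<And>i. i < m \<Longrightarrow> \<bar>x i\<bar> \<le> R"
  shows "\<exists>p\<in>grid m R K. \<forall>i<m. \<bar>x i - p i\<bar> \<le> 2 * R / real K"
proof -
  define \<eta> where "\<eta> = 2 * R / real K"
  have \<eta>: "real K * \<eta> = 2 * R" using \<open>0 < K\<close> by (simp add: \<eta>_def)
  define \<kappa> where "\<kappa> = (\<lambda>i\<in>{..<m}. nat \<lfloor>(x i + R) / \<eta>\<rfloor>)"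
  define p where "p = (\<lambda>i. if i < m then - R + real (\<kappa> i) * \<eta> else 0)"
  have "\<kappa> \<in> PiE {..<m} (\<lambda>_. {..K})"
  proof -
    have "nat \<lfloor>(x i + R) / \<eta>\<rfloor> \<le> K" if "i < m" for i
    proof (cases "R = 0")
      case False
      with x[OF that] have "\<eta> > 0" using \<open>0 < K\<close> by (simp add: \<eta>_def)
      then have "(x i + R) / \<eta> \<le> real K" using x[OF that] \<eta> by (simp add: field_simps abs_le_iff)
      then show ?thesis by (simp add: floor_le_iff nat_le_iff)
    qed (simp add: \<eta>_def)
    then show ?thesis by (auto simp: \<kappa>_def)
  qed
  then have "p \<in> grid m R K"
    unfolding grid_def by (rule rev_image_eqI) (simp only: p_def \<eta>_def)
  moreover have "\<bar>x i - p i\<bar> \<le> \<eta>" if "i < m" for i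
  proof (cases "R = 0")
    case True
    then show ?thesis using x[OF that] that by (simp add: p_def \<eta>_def)
  next
    case False
    with x[OF that] have "\<eta> > 0" using \<open>0 < K\<close> by (simp add: \<eta>_def)
    define t where "t = (x i + R) / \<eta>"
    have "t \<ge> 0" using x[OF that] \<open>\<eta> > 0\<close> by (simp add: t_def abs_le_iff)
    then have "p i = - R + of_int \<lfloor>t\<rfloor> * \<eta>" using that by (simp add: p_def \<kappa>_def t_def)
    moreover have "x i = - R + t * \<eta>" using \<open>\<eta> > 0\<close> by (simp add: t_def)
    ultimately have "x i - p i = (t - of_int \<lfloor>t\<rfloor>) * \<eta>" by (simp add: algebra_simps)
    moreover have "0 \<le> t - of_int \<lfloor>t\<rfloor>" "t - of_int \<lfloor>t\<rfloor> \<le> 1" by linarith+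
    ultimately show ?thesis using \<open>\<eta> > 0\<close> by (simp add: abs_mult mult_le_cancel_right1)
  qed
  ultimately show ?thesis unfolding \<eta>_def by blast
qed

lemma grid_nonempty: "0 \<le> R \<Longrightarrow> 0 < K \<Longrightarrow> grid m R K \<noteq> {}"
  using grid_dense[of K m "\<lambda>_. 0" R] by auto

lemma shear_admissible_cone_envelope:
  assumes d: "2 \<le> d" and P: "finite P" "P \<noteq> {}"
  shows "shear_admissible d
    (\<lambda>x. Max ((\<lambda>p. a p + (- C) * relu (Max ((\<lambda>i. \<bar>x i - p i\<bar>) ` {..<d - 1}) + - r)) ` P))"
proof -
  have d1: "1 \<le> d" using d by simp
  have "shear_admissible d (\<lambda>x. Max ((\<lambda>i. \<bar>x i + - p i\<bar>) ` {..<d - 1}))" for p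
    using d by (intro shear_admissible_Max shear_admissible_abs shear_admissible_add
        shear_admissible_coordinate shear_admissible_const) (auto simp: lessThan_empty_iff)
  then have "shear_admissible d (\<lambda>x. a p + (- C) * relu (Max ((\<lambda>i. \<bar>x i - p i\<bar>) ` {..<d - 1}) +
      - r))"
    for p
    using d1 by (intro shear_admissible_add shear_admissible_const shear_admissible_scale
        shear_admissible_relu) simp_all
  then show ?thesis by (intro shear_admissible_Max[OF d1 P])
qed

lemma indep_last_close_to_grid_point:
  assumes indep: "indep_last d G" and "1 \<le> d" "0 \<le> R" "0 \<le> \<delta>"
    and uc: "\<And>x y. x \<in> cube d R \<Longrightarrow> y \<in> cube d R \<Longrightarrow> \<forall>i<d. \<bar>x i - y i\<bar> \<le> \<delta> \<Longrightarrow> \<bar>G x - G y\<bar> \<le> \<epsilon>"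
    and x: "x \<in> cube d R" and p: "p \<in> cube (d - 1) R" and xp: "\<forall>i<d - 1. \<bar>x i - p i\<bar> \<le> \<delta>"
  shows "\<bar>G x - G p\<bar> \<le> \<epsilon>"
proof -
  have "G x = G (x(d - 1 := 0))" using indep by (simp add: indep_last_def)
  moreover have "x(d - 1 := 0) \<in> cube d R" using x \<open>0 \<le> R\<close> by (auto simp: cube_def Rvec_def)
  moreover have "p \<in> cube d R" using p cube_subset_cube_dim[of "d - 1" d R] \<open>0 \<le> R\<close> by auto
  moreover have "p (d - 1) = 0" using p by (simp add: cube_def Rvec_def)
  then have "\<forall>i<d. \<bar>(x(d - 1 := 0)) i - p i\<bar> \<le> \<delta>"
    using xp \<open>1 \<le> d\<close> \<open>0 \<le> \<delta>\<close> by (auto simp: less_diff_conv2[symmetric])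
  ultimately show ?thesis using uc by auto
qed

text \<open>\<open>G\<close> is approximated by the upper envelope of steep cones
  \<open>G p - C relu (\<parallel>x - p\<parallel>\<^sub>\<infinity> - \<delta>/2)\<close> centred at the points \<open>p\<close> of a grid on the first \<open>d - 1\<close>
  coordinates.\<close>

lemma indep_last_cone_envelope_approx:
  assumes d: "2 \<le> d" and indep: "indep_last d G" and cont: "continuous_on (Rvec d) G"
    and "\<epsilon> > 0" and "0 \<le> R"
  obtains h where "shear_admissible d h" "\<And>x. x \<in> cube d R \<Longrightarrow> \<bar>G x - h x\<bar> \<le> \<epsilon>"
proof -
  obtain \<delta> where "\<delta> > 0" and uc: "\<And>x y. x \<in> cube d R \<Longrightarrow> y \<in> cube d R \<Longrightarrow>
      \<forall>i<d. \<bar>x i - y i\<bar> \<le> \<delta> \<Longrightarrow> \<bar>G x - G y\<bar> \<le> \<epsilon>"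
    using cube_uniformly_continuous_real[OF cont \<open>\<epsilon> > 0\<close>] by (metis less_imp_le)
  obtain B where B: "\<And>x. x \<in> cube d R \<Longrightarrow> \<bar>G x\<bar> \<le> B" using cube_bounded[OF cont] by blast
  obtain K where K: "0 < K" "2 * R / real K \<le> \<delta> / 2"
    using ex_grid_spacing[of "\<delta> / 2"] \<open>\<delta> > 0\<close> by auto
  define P where "P = grid (d - 1) R K"
  have P: "finite P" "P \<subseteq> cube (d - 1) R" "P \<noteq> {}"
    using finite_grid grid_subset_cube grid_nonempty \<open>0 \<le> R\<close> K(1) by (auto simp: P_def)
  define C where "C = 4 * B / \<delta>"
  define nrm where "nrm p x = Max ((\<lambda>i. \<bar>x i - p i\<bar>) ` {..<d - 1})" for p x :: "nat \<Rightarrow> real"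
  have nrm_le: "nrm p x \<le> t \<longleftrightarrow> (\<forall>i<d - 1. \<bar>x i - p i\<bar> \<le> t)" for p x t
    unfolding nrm_def using d by (subst Max_le_iff) (auto simp: lessThan_empty_iff)
  define h where "h x = Max ((\<lambda>p. G p + (- C) * relu (nrm p x + - (\<delta> / 2))) ` P)" for x
  have "shear_admissible d h"
    unfolding h_def nrm_def using shear_admissible_cone_envelope[OF d P(1,3)] by simp
  moreover have "\<bar>G x - h x\<bar> \<le> \<epsilon>" if x: "x \<in> cube d R" for x
  proof -
    have "\<bar>x i\<bar> \<le> R" if "i < d - 1" for i using x that by (simp add: cube_def)
    from grid_dense[where m="d - 1" and x=x, OF K(1) this] obtain p0
      where "p0 \<in> P" and "\<forall>i<d - 1. \<bar>x i - p0 i\<bar> \<le> 2 * R / real K"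
      unfolding P_def by blast
    then have p0: "p0 \<in> P" "nrm p0 x \<le> \<delta> / 2"
      unfolding nrm_le using K(2) by (blast, meson order.trans)
    have close: "\<bar>G x - G p\<bar> \<le> \<epsilon>" if "p \<in> P" "nrm p x \<le> \<delta>" for p
    proof (rule indep_last_close_to_grid_point[where \<delta>=\<delta>, OF indep _ \<open>0 \<le> R\<close> _ uc x])
      show "1 \<le> d" "0 \<le> \<delta>" using d \<open>\<delta> > 0\<close> by simp_all
      show "p \<in> cube (d - 1) R" using P(2) that(1) by blast
      show "\<forall>i<d - 1. \<bar>x i - p i\<bar> \<le> \<delta>" using that(2) unfolding nrm_le .
    qed
    have "0 \<le> B" using B[OF x] by linarith
    then have C: "2 * B \<le> C * (\<delta> / 2)" "0 \<le> C" using \<open>\<delta> > 0\<close> by (simp_all add: C_def)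
    have "\<bar>G p\<bar> \<le> B" if "p \<in> P" for p
      using B P(2) that cube_subset_cube_dim[of "d - 1" d R] \<open>0 \<le> R\<close> by auto
    from cone_envelope_approx[where D=nrm and G=G, OF P(1) p0 close this B[OF x] C \<open>\<delta> > 0\<close>]
    show ?thesis by (simp add: h_def)
  qed
  ultimately show thesis by (rule that)
qed

lemma shear_admissible_of_continuous:
  assumes d: "2 \<le> d" and indep: "indep_last d G" and cont: "continuous_on (Rvec d) G"
  shows "shear_admissible d G"
proof -
  have "nn_approx d (shear_last d G)"
  proof (rule nn_approx_limit)
    fix R \<epsilon> :: real
    assume "\<epsilon> > 0"
    then obtain h where h: "shear_admissible d h" "\<And>x. x \<in> cube d \<bar>R\<bar> \<Longrightarrow> \<bar>G x - h x\<bar> \<le> \<epsilon>"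
      using indep_last_cone_envelope_approx[OF d indep cont] by (metis abs_ge_zero)
    then have "\<forall>x\<in>cube d R. \<forall>i<d. \<bar>shear_last d G x i - shear_last d h x i\<bar> \<le> \<epsilon>"
      using \<open>\<epsilon> > 0\<close> subsetD[OF cube_mono[of R "\<bar>R\<bar>"]] by (simp add: shear_last_def update_last_def)
    with h(1) show "\<exists>T'. nn_approx d T' \<and> (\<forall>x\<in>cube d R. \<forall>i<d. \<bar>shear_last d G x i - T' x i\<bar> \<le> \<epsilon>)"
      unfolding shear_admissible_def by blast
  qed
  with indep cont show ?thesis by (simp add: shear_admissible_def)
qed

subsection \<open>Affine coupling flows\<close>

definition drop_last :: "nat \<Rightarrow> (nat \<Rightarrow> real) \<Rightarrow> (nat \<Rightarrow> real)" where
  "drop_last d x = (\<lambda>i. if i < d - 1 then x i else 0)"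

lemma drop_last_update_last: "drop_last d (x(d - 1 := v)) = drop_last d x"
  by (auto simp: drop_last_def)

lemma indep_last_drop_last: "indep_last d (\<lambda>x. s (drop_last d x))"
  unfolding indep_last_def drop_last_update_last by simp

lemma continuous_on_drop_last_comp:
  assumes "continuous_on (Rvec (d - 1)) s"
  shows "continuous_on (Rvec d) (\<lambda>x. s (drop_last d x))"
proof (rule continuous_on_compose2[OF assms])
  show "continuous_on (Rvec d) (drop_last d)"
  proof (rule continuous_on_coordinatewise_then_product)
    fix i
    show "continuous_on (Rvec d) (\<lambda>x. drop_last d x i)"
      by (cases "i < d - 1") (simp_all add: drop_last_def continuous_on_coordinate)
  qed
  show "drop_last d ` Rvec d \<subseteq> Rvec (d - 1)"
    by (auto simp: drop_last_def Rvec_def)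
qed

definition ln_ext :: "real \<Rightarrow> real" where
  "ln_ext z = ln (max z 1) + min (z - 1) 0"

lemma continuous_on_ln_ext: "continuous_on UNIV ln_ext"
  unfolding ln_ext_def by (intro continuous_intros) auto

lemma strict_mono_ln_ext: "strict_mono ln_ext"
proof
  fix u v :: real
  assume "u < v"
  then have "ln (max u 1) \<le> ln (max v 1)" "min (u - 1) 0 \<le> min (v - 1) 0" by auto
  moreover have "ln (max u 1) < ln (max v 1) \<or> min (u - 1) 0 < min (v - 1) 0"
    using \<open>u < v\<close> by (cases "v \<le> 1") auto
  ultimately show "ln_ext u < ln_ext v" unfolding ln_ext_def by linarith
qed

text \<open>Where \<open>x\<^sub>l\<^sub>a\<^sub>s\<^sub>t + c \<ge> 1\<close>, the coupling map \<open>y \<mapsto> e\<^sup>s y + t\<close> factors as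
  \<open>y \<mapsto> y + c \<mapsto> ln (y + c) \<mapsto> ln (y + c) + s \<mapsto> (y + c) e\<^sup>s \<mapsto> (y + c) e\<^sup>s + t - c e\<^sup>s\<close>.\<close>

definition acf_factors :: "nat \<Rightarrow> ((nat \<Rightarrow> real) \<Rightarrow> real) \<Rightarrow> ((nat \<Rightarrow> real) \<Rightarrow> real) \<Rightarrow> real
    \<Rightarrow> (nat \<Rightarrow> real) \<Rightarrow> (nat \<Rightarrow> real)" where
  "acf_factors d s t c =
     shear_last d (\<lambda>x. t (drop_last d x) + (- c) * exp (s (drop_last d x))) \<circ>
     update_last d (\<lambda>x. exp (x (d - 1))) \<circ> shear_last d (\<lambda>x. s (drop_last d x)) \<circ>
     update_last d (\<lambda>x. ln_ext (x (d - 1))) \<circ> update_last d (\<lambda>x. 1 * x (d - 1) + c)"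

lemma acf_map_eq_update_last:
  "acf_map d s t = update_last d (\<lambda>x. exp (s (drop_last d x)) * x (d - 1) + t (drop_last d x))"
  by (rule ext) (simp add: acf_map_def update_last_def drop_last_def Let_def)

lemma acf_factors_eq_acf_map:
  assumes "x (d - 1) + c \<ge> 1"
  shows "acf_factors d s t c x = acf_map d s t x"
proof -
  have "ln_ext (x (d - 1) + c) = ln (x (d - 1) + c)" using assms by (simp add: ln_ext_def)
  moreover have
    "exp (ln (x (d - 1) + c) + s (drop_last d x)) = (x (d - 1) + c) * exp (s (drop_last d x))"
    using assms by (simp add: exp_add)
  ultimately show ?thesis
    by (simp add: acf_factors_def acf_map_eq_update_last shear_last_def update_last_def
        drop_last_update_last[simplified] algebra_simps)
qed

lemma admissible_acf_factors:
  assumes d: "2 \<le> d" and s: "continuous_on (Rvec (d - 1)) s" and t: "continuous_on (Rvec (d - 1)) t"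
  shows "admissible d (acf_factors d s t c)"
proof -
  have d1: "1 \<le> d" using d by simp
  have cont_s: "continuous_on (Rvec d) (\<lambda>x. s (drop_last d x))"
    and cont_t: "continuous_on (Rvec d) (\<lambda>x. t (drop_last d x))"
    using s t by (simp_all add: continuous_on_drop_last_comp)
  have "admissible d (update_last d (\<lambda>x. 1 * x (d - 1) + c))"
    using nn_exact_imp_nn_approx[OF nn_exact_update_last_scale[OF d1]]
    by (intro admissible_update_last d1 continuous_intros)
  moreover have "shear_admissible d (\<lambda>x. t (drop_last d x) + (- c) * exp (s (drop_last d x)))"
    using cont_s cont_t
    by (intro shear_admissible_of_continuous d continuous_intros)
      (unfold indep_last_def drop_last_update_last, simp)
  ultimately show ?thesis
    unfolding acf_factors_def using d1
    by (intro admissible_comp admissible_update_last_monotone admissible_shear_last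
        shear_admissible_of_continuous[OF d indep_last_drop_last cont_s]
        strict_mono_ln_ext continuous_on_ln_ext strict_monoI continuous_intros) auto
qed

lemma admissible_acf_map:
  assumes d: "2 \<le> d" and s: "continuous_on (Rvec (d - 1)) s" and t: "continuous_on (Rvec (d - 1)) t"
  shows "admissible d (acf_map d s t)"
proof -
  have d1: "1 \<le> d" using d by simp
  have "nn_approx d (acf_map d s t)"
  proof (rule nn_approx_limit)
    fix R \<epsilon> :: real
    assume "\<epsilon> > 0"
    have "acf_factors d s t (\<bar>R\<bar> + 1) x = acf_map d s t x" if "x \<in> cube d R" for x
    proof (rule acf_factors_eq_acf_map)
      have "\<bar>x (d - 1)\<bar> \<le> R" using that d by (simp add: cube_def)
      then show "x (d - 1) + (\<bar>R\<bar> + 1) \<ge> 1" by linarith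
    qed
    moreover have "nn_approx d (acf_factors d s t (\<bar>R\<bar> + 1))"
      using admissible_acf_factors[OF d s t] by (simp add: admissible_def)
    ultimately show "\<exists>T'. nn_approx d T' \<and> (\<forall>x\<in>cube d R. \<forall>i<d. \<bar>acf_map d s t x i - T' x i\<bar> \<le> \<epsilon>)"
      using \<open>\<epsilon> > 0\<close> by (intro exI[of _ "acf_factors d s t (\<bar>R\<bar> + 1)"]) simp
  qed
  moreover have
    "continuous_on (Rvec d) (\<lambda>x. exp (s (drop_last d x)) * x (d - 1) + t (drop_last d x))"
    using continuous_on_drop_last_comp[OF s] continuous_on_drop_last_comp[OF t]
    by (intro continuous_intros)
  ultimately show ?thesis
    unfolding acf_map_eq_update_last using d1 by (intro admissible_update_last)
qed

lemma admissible_aff: "admissible d (aff A b d d)"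
proof -
  have "nn_exact d (aff A b d d)"
    using aff_in_NN_LReLU unfolding nn_exact_def by blast
  then have "nn_approx d (aff A b d d)" by (rule nn_exact_imp_nn_approx)
  moreover have "continuous_on (Rvec d) (aff A b d d)"
  proof (rule continuous_on_coordinatewise_then_product)
    fix i
    show "continuous_on (Rvec d) (\<lambda>x. aff A b d d x i)"
      by (cases "i < d")
        (simp_all add: aff_def continuous_on_sum continuous_on_add continuous_on_mult
          continuous_on_coordinate)
  qed
  moreover have "aff A b d d ` Rvec d \<subseteq> Rvec d" by (auto simp: aff_def Rvec_def)
  ultimately show ?thesis by (simp add: admissible_def)
qed

lemma admissible_inn:
  assumes "2 \<le> d" shows "inn (ACF d) d f \<Longrightarrow> admissible d f"
proof (induction rule: inn.induct)
  case (base W1 g W2)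
  then have "admissible d W1" "admissible d g" "admissible d W2"
    using assms by (auto simp: inv_aff_def ACF_def admissible_aff admissible_acf_map)
  then show ?case by (intro admissible_comp)
next
  case (step W g f)
  then have "admissible d W" "admissible d g"
    using assms by (auto simp: inv_aff_def ACF_def admissible_aff admissible_acf_map)
  with step.IH show ?case by (intro admissible_comp)
qed

theorem mainTheorem7:
  fixes d :: nat and f :: "(nat \<Rightarrow> real) \<Rightarrow> (nat \<Rightarrow> real)"
    and K :: "(nat \<Rightarrow> real) set" and \<epsilon> :: real
  assumes "2 \<le> d"
    and "f \<in> INN (ACF d) d"
    and "compact K" and "K \<subseteq> Rvec d"
    and "\<epsilon> > 0"
  shows "\<exists>g \<in> NN_LReLU d. \<exists>\<delta> < \<epsilon>. \<forall>x \<in> K. linf d (f x - g x) \<le> \<delta>"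
proof -
  have "nn_approx d f"
    using admissible_inn[OF assms(1)] assms(2) by (simp add: INN_def admissible_def)
  moreover obtain R where K: "K \<subseteq> cube d R" using compact_subset_cube[OF assms(3,4)] .
  ultimately obtain g where g: "g \<in> NN_LReLU d"
    and close: "\<And>x i. x \<in> cube d R \<Longrightarrow> i < d \<Longrightarrow> \<bar>f x i - g x i\<bar> \<le> \<epsilon> / 2"
    using nn_approxE[of d f "\<epsilon> / 2"] assms(5) by auto
  have "linf d (f x - g x) \<le> \<epsilon> / 2" if "x \<in> K" for x
    unfolding linf_def using assms(1) close K that by (subst Max_le_iff) (auto simp:
        lessThan_empty_iff)
  then show ?thesis using g assms(5) by (intro bexI[of _ g] exI[of _ "\<epsilon> / 2"]) auto
qed

end
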